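(* Let $\mathcal F$ be a filtration array and $E=(E_{m,n})_{m,n\in\mathbb N}$ a nonnegative process adapted to $\mathcal F$ having the asymptotic supermartingale property (in $L_1$, for $\mathcal F$, uniformly in $\mathcal P$). If $E$ is asymptotically calibrated, i.e. $\limsup_{m\to\infty}\sup_{P\in\mathcal P}\mathbb E_P[E_{m,0}]\le 1$, then $E$ is an $r$-asymptotic e-process for $\mathcal P$ and $\mathcal F$ for every extended integer sequence $r=(r_m)_{m\in\mathbb N}$ satisfying $$\lim_{m\to\infty}\sup_{P\in\mathcal P}\mathbb E_P\Big[\sum_{n=0}^{r_m-1}\delta_{m,n}^+\Big]=0 .$$
   Context: $(\Omega,\mathcal A)$ is a measurable space, $\mathcal P$ a set of probability measures on it, $\mathbb N=\{0,1,\dots\}$; extended integers are elements of $\mathbb N\cup\{\infty\}$. Nonnegative random variables take values in $[0,\infty]$ with $\mathbb E_P[X]:=\infty$ if not $P$-integrable; $X_\infty:=\limsup_nX_n$. A filtration array is a family $(\mathcal F_{m,n})_{m,n\in\mathbb N}$ of sub-$\sigma$-algebras with $\mathcal F_{m,n}\subset\mathcal F_{m+1,n}\cap\mathcal F_{m,n+1}$; adapted means $E_{m,n}$ is $\mathcal F_{m,n}$-measurable. For $P\in\mathcal P$, $\delta_{m,n}=\mathbb E_P[E_{m,n+1}\mid\mathcal F_{m,n}]-E_{m,n}$ if $E_{m,n+1}$ is $P$-integrable and $\delta_{m,n}=\infty$ otherwise (dependence on $P$ suppressed); $x^+=\max\{x,0\}$. The asymptotic supermartingale property: $\lim_{m}\sup_{P\in\mathcal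 P}\mathbb E_P[\delta_{m,n}^+]=0$ for every $n$. For a filtration $\mathcal G$ and $\rho\in\mathbb N\cup\{\infty\}$, $\mathcal T(\rho,\mathcal G,\mathcal P)$ is the set of $\mathcal G$-stopping times $\tau$ (values in $\mathbb N\cup\{\infty\}$) with $P[\tau\le\rho]=1$ for all $P\in\mathcal P$; $\mathcal T(r,\mathcal F,\mathcal P)$ is the set of sequences $(\tau_m)$ with $\tau_m\in\mathcal T(r_m,\mathcal F_{m,\bullet},\mathcal P)$. $E$ is an $r$-asymptotic e-process if for every $\tau\in\mathcal T(r,\mathcal F,\mathcal P)$, $\limsup_m\sup_{P\in\mathcal P}\mathbb E_P[E_{m,\tau_m}]\le 1$. *)

theory Defs
  imports "HOL-Probability.Probability"
begin

text \<open>The measurable space (Omega, A) is given by a measure M (only space M and sets M matter).\<close>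

definition filtration_array :: "'a measure \<Rightarrow> (nat \<Rightarrow> nat \<Rightarrow> 'a measure) \<Rightarrow> bool" where
  "filtration_array M F \<longleftrightarrow>
     (\<forall>m n. subalgebra M (F m n)) \<and>
     (\<forall>m n. sets (F m n) \<subseteq> sets (F (Suc m) n) \<inter> sets (F m (Suc n)))"

definition adapted_array :: "(nat \<Rightarrow> nat \<Rightarrow> 'a measure) \<Rightarrow> (nat \<Rightarrow> nat \<Rightarrow> 'a \<Rightarrow> ennreal) \<Rightarrow> bool" where
  "adapted_array F E \<longleftrightarrow> (\<forall>m n. E m n \<in> borel_measurable (F m n))"

definition delta :: "'a measure \<Rightarrow> (nat \<Rightarrow> nat \<Rightarrow> 'a measure) \<Rightarrow> (nat \<Rightarrow> nat \<Rightarrow> 'a \<Rightarrow> ennreal)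
    \<Rightarrow> nat \<Rightarrow> nat \<Rightarrow> 'a \<Rightarrow> ereal" where
  "delta P F E m n \<omega> =
     (if (\<integral>\<^sup>+ x. E m (Suc n) x \<partial>P) < \<infinity>
      then enn2ereal (nn_cond_exp P (F m n) (E m (Suc n)) \<omega>) - enn2ereal (E m n \<omega>)
      else \<infinity>)"

definition delta_pos :: "'a measure \<Rightarrow> (nat \<Rightarrow> nat \<Rightarrow> 'a measure) \<Rightarrow> (nat \<Rightarrow> nat \<Rightarrow> 'a \<Rightarrow> ennreal)
    \<Rightarrow> nat \<Rightarrow> nat \<Rightarrow> 'a \<Rightarrow> ennreal" where
  "delta_pos P F E m n \<omega> = e2ennreal (max (delta P F E m n \<omega>) 0)"

definition asymptotic_supermartingale ::
    "'a measure set \<Rightarrow> (nat \<Rightarrow> nat \<Rightarrow> 'a measure) \<Rightarrow> (nat \<Rightarrow> nat \<Rightarrow> 'a \<Rightarrow> ennreal) \<Rightarrow> bool" where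
  "asymptotic_supermartingale Ps F E \<longleftrightarrow>
     (\<forall>n. (\<lambda>m. SUP P\<in>Ps. \<integral>\<^sup>+ \<omega>. delta_pos P F E m n \<omega> \<partial>P) \<longlonglongrightarrow> 0)"

definition ext_stopping_time :: "'a measure \<Rightarrow> (nat \<Rightarrow> 'a measure) \<Rightarrow> ('a \<Rightarrow> enat) \<Rightarrow> bool" where
  "ext_stopping_time M G \<tau> \<longleftrightarrow> (\<forall>n::nat. {\<omega> \<in> space M. \<tau> \<omega> \<le> enat n} \<in> sets (G n))"

definition stopping_times_bounded ::
    "'a measure \<Rightarrow> enat \<Rightarrow> (nat \<Rightarrow> 'a measure) \<Rightarrow> 'a measure set \<Rightarrow> ('a \<Rightarrow> enat) set" where
  "stopping_times_bounded M \<rho> G Ps =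
     {\<tau>. ext_stopping_time M G \<tau> \<and> (\<forall>P\<in>Ps. AE \<omega> in P. \<tau> \<omega> \<le> \<rho>)}"

definition stopped_value :: "(nat \<Rightarrow> nat \<Rightarrow> 'a \<Rightarrow> ennreal) \<Rightarrow> nat \<Rightarrow> ('a \<Rightarrow> enat) \<Rightarrow> 'a \<Rightarrow> ennreal" where
  "stopped_value E m \<tau> \<omega> =
     (case \<tau> \<omega> of enat n \<Rightarrow> E m n \<omega> | \<infinity> \<Rightarrow> limsup (\<lambda>n. E m n \<omega>))"

definition asymptotic_e_process ::
    "'a measure \<Rightarrow> (nat \<Rightarrow> enat) \<Rightarrow> 'a measure set \<Rightarrow> (nat \<Rightarrow> nat \<Rightarrow> 'a measure)
      \<Rightarrow> (nat \<Rightarrow> nat \<Rightarrow> 'a \<Rightarrow> ennreal) \<Rightarrow> bool" where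
  "asymptotic_e_process M r Ps F E \<longleftrightarrow>
     (\<forall>\<tau>::nat \<Rightarrow> 'a \<Rightarrow> enat. (\<forall>m. \<tau> m \<in> stopping_times_bounded M (r m) (F m) Ps) \<longrightarrow>
        limsup (\<lambda>m. SUP P\<in>Ps. \<integral>\<^sup>+ \<omega>. stopped_value E m (\<tau> m) \<omega> \<partial>P) \<le> 1)"

end

theory Submission
  imports Defs
begin

(*
  For fixed m and P, the definition of delta gives the one-step inequality
  int_A E_{m,n+1} dP <= int_A (E_{m,n} + delta+_{m,n}) dP for A in F_{m,n}.  Summing it along a
  bounded stopping time bounds int E_{m,min tau sigma} dP by
  int E_{m,0} dP + int sum_{n<r_m} delta+_{m,n} dP whenever tau <= r_m.
  For unbounded tau the stopped value is limsup_n E_{m,min tau n}, which Fatou's lemma does not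
  control.  Instead, a simple function g <= limsup_n X_n measurable for the limit sigma-algebra
  agrees, off a set of small probability, with some F_N-measurable h; stopping X at the first time
  after N at which X_n + eps >= h shows that int g dP obeys every bound valid for all bounded
  stopped values.  Taking the supremum over P and the limsup over m, the defect term vanishes by
  the hypothesis on r.
*)

lemma bounded_hitting_time_le:
  fixes N K :: nat
  shows "(LEAST n. N \<le> n \<and> (C n \<or> N + K \<le> n)) \<le> N + K"
  by (rule Least_le) simp

lemma bounded_hitting_time_hits:
  fixes N K m :: nat
  assumes "m \<in> {N..N + K}" "C m"
  shows "C (LEAST n. N \<le> n \<and> (C n \<or> N + K \<le> n))"
proof -
  let ?L = "LEAST n. N \<le> n \<and> (C n \<or> N + K \<le> n)"
  have "N \<le> ?L \<and> (C ?L \<or> N + K \<le> ?L)"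
    by (rule LeastI[of _ m]) (use assms in auto)
  moreover have "?L \<le> m"
    by (rule Least_le) (use assms in auto)
  ultimately show ?thesis
    using assms by (metis atLeastAtMost_iff le_antisym order.trans)
qed

lemma le_limsup_imp_ex_le_add:
  fixes x :: "nat \<Rightarrow> ennreal"
  assumes "a \<le> limsup x" "a < top" "0 < c"
  shows "\<exists>n\<ge>N. a \<le> x n + c"
proof (cases "a \<le> c")
  case True
  then show ?thesis
    by (intro exI[of _ N]) (simp add: add_increasing)
next
  case False
  then have "a - c < a"
    using assms(2,3) by (intro ennreal_between) auto
  also have "a \<le> (SUP n\<in>{N..}. x n)"
    using assms(1) unfolding limsup_INF_SUP by (meson INF_lower UNIV_I order_trans)
  finally obtain n where "N \<le> n" "a - c < x n"
    by (auto simp: less_SUP_iff)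
  then have "a \<le> c + x n"
    using ennreal_minus_le_iff[of a c "x n"] by auto
  then show ?thesis
    using \<open>N \<le> n\<close> by (auto simp: add.commute)
qed

lemma (in finite_measure) measure_sym_diff_trans:
  assumes "A \<in> sets M" "B \<in> sets M" "C \<in> sets M"
  shows "measure M (sym_diff A C) \<le> measure M (sym_diff A B) + measure M (sym_diff B C)"
proof -
  have "measure M (sym_diff A C) \<le> measure M (sym_diff A B \<union> sym_diff B C)"
    using assms by (intro finite_measure_mono) auto
  also have "\<dots> \<le> measure M (sym_diff A B) + measure M (sym_diff B C)"
    using assms by (intro measure_Un_le) auto
  finally show ?thesis .
qed

locale filtered_prob_space = prob_space M + filtration "space M" F
  for M :: "'a measure" and F :: "nat \<Rightarrow> 'a measure" +
  assumes sets_F_subset: "sets (F n) \<subseteq> sets M"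
begin

lemma subalgebra_F: "subalgebra M (F n)"
  using sets_F_subset space_F by (simp add: subalgebra_def)

lemma measurable_F: "f \<in> F n \<rightarrow>\<^sub>M N \<Longrightarrow> f \<in> M \<rightarrow>\<^sub>M N"
  by (rule measurable_from_subalg[OF subalgebra_F])

lemma measurable_F_mono: "n \<le> k \<Longrightarrow> f \<in> F n \<rightarrow>\<^sub>M N \<Longrightarrow> f \<in> F k \<rightarrow>\<^sub>M N"
  by (rule measurable_from_subalg) (simp_all add: subalgebra_def space_F sets_F_mono)

lemma sets_F_into_M: "A \<in> sets (F n) \<Longrightarrow> A \<in> sets M"
  using sets_F_subset by blast

abbreviation F_infinity :: "'a measure" where
  "F_infinity \<equiv> sigma (space M) (\<Union>n. sets (F n))"

lemma sets_F_infinity: "sets F_infinity = sigma_sets (space M) (\<Union>n. sets (F n))"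
  using sets.space_closed[of "F _"] by (intro sets_measure_of) (auto simp: space_F)

lemma space_F_infinity: "space F_infinity = space M"
  using sets.space_closed[of "F _"] by (intro space_measure_of) (auto simp: space_F)

lemma sigma_sets_F_subset: "sigma_sets (space M) (\<Union>n. sets (F n)) \<subseteq> sets M"
  using sets_F_subset by (intro sets.sigma_sets_subset) auto

lemma subalgebra_F_infinity: "subalgebra M F_infinity"
  using sigma_sets_F_subset by (simp add: subalgebra_def sets_F_infinity space_F_infinity)

lemma measurable_F_infinity: "f \<in> F n \<rightarrow>\<^sub>M N \<Longrightarrow> f \<in> F_infinity \<rightarrow>\<^sub>M N"
  by (rule measurable_from_subalg)
     (auto simp: subalgebra_def sets_F_infinity space_F_infinity space_F intro: sigma_sets.Basic)

subsection \<open>Approximation of the limit \<sigma>-algebra by the filtration\<close>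

definition approximable :: "'a set \<Rightarrow> bool" where
  "approximable A \<longleftrightarrow> (\<forall>\<eta>>0. \<exists>n B. B \<in> sets (F n) \<and> measure M (sym_diff A B) < \<eta>)"

lemma approximable_F: "A \<in> sets (F n) \<Longrightarrow> approximable A"
  unfolding approximable_def by (intro allI impI exI[of _ n] exI[of _ A]) auto

lemma approximable_Un:
  assumes A: "approximable A" "A \<in> sets M" and A': "approximable A'" "A' \<in> sets M"
  shows "approximable (A \<union> A')"
  unfolding approximable_def
proof (intro allI impI)
  fix \<eta> :: real assume "\<eta> > 0"
  then obtain n B n' B' where B: "B \<in> sets (F n)" "measure M (sym_diff A B) < \<eta> / 2"
    and B': "B' \<in> sets (F n')" "measure M (sym_diff A' B') < \<eta> / 2"
    using A(1) A'(1) unfolding approximable_def by (meson half_gt_zero)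
  have "measure M (sym_diff (A \<union> A') (B \<union> B')) \<le> measure M (sym_diff A B \<union> sym_diff A' B')"
    using A A' B' B sets_F_into_M by (intro finite_measure_mono) auto
  also have "\<dots> \<le> measure M (sym_diff A B) + measure M (sym_diff A' B')"
    using A A' B B' sets_F_into_M by (intro measure_Un_le) auto
  also have "\<dots> < \<eta>"
    using B(2) B'(2) by simp
  finally have "measure M (sym_diff (A \<union> A') (B \<union> B')) < \<eta>" .
  moreover have "B \<union> B' \<in> sets (F (max n n'))"
    using B(1) B'(1) sets_F_mono[of n "max n n'"] sets_F_mono[of n' "max n n'"] by auto
  ultimately show "\<exists>n B. B \<in> sets (F n) \<and> measure M (sym_diff (A \<union> A') B) < \<eta>"
    by blast
qed

lemma approximable_Compl:
  assumes A: "approximable A" "A \<in> sets M"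
  shows "approximable (space M - A)"
  unfolding approximable_def
proof (intro allI impI)
  fix \<eta> :: real assume "\<eta> > 0"
  then obtain n B where B: "B \<in> sets (F n)" "measure M (sym_diff A B) < \<eta>"
    using A(1) unfolding approximable_def by blast
  have "sym_diff (space M - A) (space M - B) = sym_diff A B"
    using A(2) B(1) sets.sets_into_space sets_F_into_M by blast
  moreover have "space M - B \<in> sets (F n)"
    using B(1) by (metis sets.compl_sets space_F)
  ultimately show "\<exists>n B. B \<in> sets (F n) \<and> measure M (sym_diff (space M - A) B) < \<eta>"
    using B(2) by metis
qed

lemma approximable_UN_lessThan:
  fixes a :: "nat \<Rightarrow> 'a set"
  assumes "\<And>i. approximable (a i)" "\<And>i. a i \<in> sets M"
  shows "approximable (\<Union>i<I. a i)"
proof (induction I)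
  case 0
  show ?case using approximable_F[of "{}" 0] by simp
next
  case (Suc I)
  then show ?case
    using approximable_Un[of "a I" "\<Union>i<I. a i"] assms by (simp add: lessThan_Suc Un_commute)
qed

lemma approximable_UN:
  fixes a :: "nat \<Rightarrow> 'a set"
  assumes a: "\<And>i. approximable (a i)" "\<And>i. a i \<in> sets M"
  shows "approximable (\<Union>i. a i)"
  unfolding approximable_def
proof (intro allI impI)
  fix \<eta> :: real assume \<eta>: "\<eta> > 0"
  have "(\<lambda>I. measure M (\<Union>i<I. a i)) \<longlonglongrightarrow> measure M (\<Union>I. \<Union>i<I. a i)"
    using a(2) by (intro finite_Lim_measure_incseq) (auto simp: incseq_def intro: less_le_trans)
  moreover have "(\<Union>I. \<Union>i<I. a i) = (\<Union>i. a i)" by blast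
  ultimately have "eventually (\<lambda>I. measure M (\<Union>i. a i) - \<eta> / 2 < measure M (\<Union>i<I. a i)) sequentially"
    using \<eta> by (intro order_tendstoD(1)) auto
  then obtain I where I: "measure M (\<Union>i. a i) - measure M (\<Union>i<I. a i) < \<eta> / 2"
    unfolding eventually_sequentially by (metis diff_less_eq add.commute order_refl)
  obtain n B where B: "B \<in> sets (F n)" "measure M (sym_diff (\<Union>i<I. a i) B) < \<eta> / 2"
    using approximable_UN_lessThan[OF a] \<eta> unfolding approximable_def by (meson half_gt_zero)
  have "measure M (sym_diff (\<Union>i. a i) (\<Union>i<I. a i)) = measure M (\<Union>i. a i) - measure M (\<Union>i<I. a i)"
    using a(2) by (subst finite_measure_Diff[symmetric]) (auto intro!: arg_cong[where f="measure M"])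
  then have "measure M (sym_diff (\<Union>i. a i) B) < \<eta>"
    using measure_sym_diff_trans[of "\<Union>i. a i" "\<Union>i<I. a i" B] a(2) B sets_F_into_M I by fastforce
  then show "\<exists>n B. B \<in> sets (F n) \<and> measure M (sym_diff (\<Union>i. a i) B) < \<eta>"
    using B(1) by blast
qed

lemma approximable_F_infinity:
  assumes "A \<in> sets F_infinity"
  shows "approximable A"
  using assms unfolding sets_F_infinity
proof (induction rule: sigma_sets.induct)
  case (Compl a)
  moreover have "a \<in> sets M"
    using Compl.hyps sigma_sets_F_subset by blast
  ultimately show ?case by (intro approximable_Compl)
next
  case (Union a)
  moreover have "a i \<in> sets M" for i
    using Union.hyps sigma_sets_F_subset by blast
  ultimately show ?case by (intro approximable_UN)
qed (auto intro: approximable_F)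

lemma approximable_common_index:
  assumes "finite V" "\<And>v. v \<in> V \<Longrightarrow> approximable (A v)" "\<eta> > 0"
  obtains N B where "\<And>v. v \<in> V \<Longrightarrow> B v \<in> sets (F N)"
    "\<And>v. v \<in> V \<Longrightarrow> measure M (sym_diff (A v) (B v)) < \<eta>"
proof -
  have "\<forall>v\<in>V. \<exists>n B. B \<in> sets (F n) \<and> measure M (sym_diff (A v) B) < \<eta>"
    using assms(2,3) unfolding approximable_def by blast
  then obtain n B where B: "\<And>v. v \<in> V \<Longrightarrow> B v \<in> sets (F (n v))"
    "\<And>v. v \<in> V \<Longrightarrow> measure M (sym_diff (A v) (B v)) < \<eta>"
    by metis
  have "B v \<in> sets (F (Max (n ` V)))" if "v \<in> V" for v
    using sets_F_mono[of "n v" "Max (n ` V)"] B(1)[OF that] that assms(1) by auto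
  then show thesis
    using B(2) by (rule that)
qed

lemma finite_range_approx_F:
  fixes g :: "'a \<Rightarrow> ennreal"
  assumes g: "g \<in> borel_measurable F_infinity"
    and fin: "finite (g ` space M)" and \<eta>: "\<eta> > 0"
  obtains h N Bad where "h \<in> borel_measurable (F N)" "Bad \<in> sets M" "measure M Bad < \<eta>"
    "\<And>\<omega>. \<omega> \<in> space M - Bad \<Longrightarrow> h \<omega> = g \<omega>"
proof -
  define V where "V = g ` space M"
  have V: "finite V" using fin by (simp add: V_def)
  define A where "A v = g -` {v} \<inter> space M" for v
  define \<eta>' where "\<eta>' = \<eta> / (card V + 1)"
  have "A v \<in> sets F_infinity" for v
    using measurable_sets[OF g, of "{v}"] unfolding A_def space_F_infinity by simp
  then have A: "approximable (A v)" "A v \<in> sets M" for v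
    using approximable_F_infinity subalgebra_F_infinity by (auto simp: subalgebra_def)
  moreover have "\<eta>' > 0"
    using \<eta> by (simp add: \<eta>'_def)
  ultimately obtain N B where B_N: "\<And>v. v \<in> V \<Longrightarrow> B v \<in> sets (F N)"
    and B: "\<And>v. v \<in> V \<Longrightarrow> measure M (sym_diff (A v) (B v)) < \<eta>'"
    using approximable_common_index[OF V] by metis
  define Bad where "Bad = (\<Union>v\<in>V. sym_diff (A v) (B v))"
  show thesis
  proof
    show "(\<lambda>\<omega>. \<Sum>v\<in>V. v * indicator (B v) \<omega>) \<in> borel_measurable (F N)"
      using B_N by measurable
    show "Bad \<in> sets M"
      unfolding Bad_def using V A(2) B_N sets_F_into_M by (intro sets.finite_UN) blast+
    have "measure M Bad \<le> (\<Sum>v\<in>V. measure M (sym_diff (A v) (B v)))"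
      unfolding Bad_def using V A(2) B_N sets_F_into_M
      by (intro finite_measure_subadditive_finite) auto
    also have "\<dots> \<le> (\<Sum>v\<in>V. \<eta>')"
      by (intro sum_mono less_imp_le B)
    also have "\<dots> = card V * \<eta>'"
      by simp
    also have "\<dots> < \<eta>"
      using \<eta> by (simp add: \<eta>'_def field_simps)
    finally show "measure M Bad < \<eta>" .
    fix \<omega> assume \<omega>: "\<omega> \<in> space M - Bad"
    have "\<omega> \<in> B v \<longleftrightarrow> g \<omega> = v" if "v \<in> V" for v
    proof -
      have "\<omega> \<notin> sym_diff (A v) (B v)"
        using \<omega> that unfolding Bad_def by blast
      then show ?thesis
        using \<omega> by (auto simp: A_def)
    qed
    then have "(\<Sum>v\<in>V. v * indicator (B v) \<omega>) = (\<Sum>v\<in>V. if v = g \<omega> then v else 0)"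
      by (intro sum.cong) auto
    also have "\<dots> = g \<omega>"
      using fin \<omega> by (simp add: V_def)
    finally show "(\<Sum>v\<in>V. v * indicator (B v) \<omega>) = g \<omega>" .
  qed
qed

lemma measurable_stopped_F:
  assumes T: "stopping_time F T" and T_le: "\<And>\<omega>. T \<omega> \<le> K" and X: "\<And>n. X n \<in> F n \<rightarrow>\<^sub>M N"
  shows "(\<lambda>\<omega>. X (T \<omega>) \<omega>) \<in> F K \<rightarrow>\<^sub>M N"
proof (rule measurable_compose_countable'[where I="{..K}"])
  show "X n \<in> F K \<rightarrow>\<^sub>M N" if "n \<in> {..K}" for n
    using measurable_F_mono[OF _ X] that by simp
  have "T -` {n} \<inter> space (F K) \<in> sets (F K)" if "n \<le> K" for n
  proof -
    have "{\<omega>\<in>space M. T \<omega> = n} \<in> sets (F K)"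
      using stopping_time_eq_const[OF T, of n] sets_F_mono[OF that] by (auto simp: pred_def space_F)
    moreover have "T -` {n} \<inter> space (F K) = {\<omega>\<in>space M. T \<omega> = n}"
      by (auto simp: space_F)
    ultimately show ?thesis by simp
  qed
  then show "T \<in> F K \<rightarrow>\<^sub>M count_space {..K}"
    using T_le by (auto simp: measurable_count_space_eq2_countable)
qed simp

lemma stopping_time_bounded_hitting:
  assumes "\<And>n. N \<le> n \<Longrightarrow> Measurable.pred (F n) (C n)"
  shows "stopping_time F (\<lambda>\<omega>. LEAST n. N \<le> n \<and> (C n \<omega> \<or> N + K \<le> n))"
proof -
  have "Measurable.pred (F n) (\<lambda>\<omega>. N \<le> n \<and> (C n \<omega> \<or> N + K \<le> n))" for n
  proof (cases "N \<le> n")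
    case True
    then have [measurable]: "Measurable.pred (F n) (C n)" by (rule assms)
    show ?thesis by measurable
  qed simp
  moreover have "\<exists>n. N \<le> n \<and> (C n \<omega> \<or> N + K \<le> n)" for \<omega>
    by (intro exI[of _ "N + K"]) simp
  ultimately have "stopping_time F (\<lambda>\<omega>. Inf {n. N \<le> n \<and> (C n \<omega> \<or> N + K \<le> n)})"
    by (rule stopping_time_Inf_nat[OF filtration_axioms])
  then show ?thesis by (simp add: Inf_nat_def)
qed

lemma stopping_time_min_enat:
  assumes \<tau>: "ext_stopping_time M F \<tau>" and \<sigma>: "stopping_time F \<sigma>"
  shows "stopping_time F (\<lambda>\<omega>. the_enat (min (\<tau> \<omega>) (enat (\<sigma> \<omega>))))"
proof (rule stopping_timeI)
  fix t
  have "Measurable.pred (F t) (\<lambda>\<omega>. \<tau> \<omega> \<le> enat t)"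
    using \<tau> by (simp add: ext_stopping_time_def pred_def space_F)
  moreover have "Measurable.pred (F t) (\<lambda>\<omega>. \<sigma> \<omega> \<le> t)"
    using \<sigma> by (rule stopping_timeD)
  ultimately have "Measurable.pred (F t) (\<lambda>\<omega>. \<tau> \<omega> \<le> enat t \<or> \<sigma> \<omega> \<le> t)"
    by measurable
  moreover have "the_enat (min (\<tau> \<omega>) (enat (\<sigma> \<omega>))) \<le> t \<longleftrightarrow> \<tau> \<omega> \<le> enat t \<or> \<sigma> \<omega> \<le> t" for \<omega>
    by (cases "\<tau> \<omega>") auto
  ultimately show "Measurable.pred (F t) (\<lambda>\<omega>. the_enat (min (\<tau> \<omega>) (enat (\<sigma> \<omega>))) \<le> t)"
    by simp
qed

subsection \<open>Integrals of limits superior via bounded stopping\<close>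

lemma nn_integral_hitting_within_le:
  fixes X :: "nat \<Rightarrow> 'a \<Rightarrow> ennreal" and h :: "'a \<Rightarrow> ennreal"
  assumes X: "\<And>n. X n \<in> borel_measurable (F n)" and h: "h \<in> borel_measurable (F N)"
    and stopped: "\<And>T K. stopping_time F T \<Longrightarrow> (\<And>\<omega>. T \<omega> \<le> K) \<Longrightarrow> (\<integral>\<^sup>+\<omega>. X (T \<omega>) \<omega> \<partial>M) \<le> S"
  shows "(\<integral>\<^sup>+\<omega>. h \<omega> * indicator {\<omega>\<in>space M. \<exists>n\<in>{N..N + K}. h \<omega> \<le> X n \<omega> + c} \<omega> \<partial>M) \<le> S + c"
proof -
  define C where "C n \<omega> \<longleftrightarrow> h \<omega> \<le> X n \<omega> + c" for n \<omega>
  define T where "T \<omega> = (LEAST n. N \<le> n \<and> (C n \<omega> \<or> N + K \<le> n))" for \<omega>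
  have "Measurable.pred (F n) (C n)" if "N \<le> n" for n
  proof -
    have [measurable]: "h \<in> borel_measurable (F n)" "X n \<in> borel_measurable (F n)"
      using measurable_F_mono[OF that h] X by auto
    show ?thesis unfolding C_def by measurable
  qed
  then have T: "stopping_time F T"
    unfolding T_def by (rule stopping_time_bounded_hitting)
  have T_le: "T \<omega> \<le> N + K" for \<omega>
    unfolding T_def by (rule bounded_hitting_time_le)
  have [measurable]: "(\<lambda>\<omega>. X (T \<omega>) \<omega>) \<in> borel_measurable M"
    using measurable_F[OF measurable_stopped_F[OF T T_le X]] .
  have "(\<integral>\<^sup>+\<omega>. h \<omega> * indicator {\<omega>\<in>space M. \<exists>n\<in>{N..N + K}. C n \<omega>} \<omega> \<partial>M)
      \<le> (\<integral>\<^sup>+\<omega>. X (T \<omega>) \<omega> + c \<partial>M)"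
  proof (intro nn_integral_mono)
    fix \<omega> assume "\<omega> \<in> space M"
    show "h \<omega> * indicator {\<omega>\<in>space M. \<exists>n\<in>{N..N + K}. C n \<omega>} \<omega> \<le> X (T \<omega>) \<omega> + c"
    proof (cases "\<exists>n\<in>{N..N + K}. C n \<omega>")
      case True
      then have "C (T \<omega>) \<omega>"
        unfolding T_def using bounded_hitting_time_hits[of _ N K "\<lambda>n. C n \<omega>"] by blast
      then show ?thesis
        unfolding C_def by (rule order_trans[rotated]) (simp add: indicator_def)
    qed simp
  qed
  also have "\<dots> = (\<integral>\<^sup>+\<omega>. X (T \<omega>) \<omega> \<partial>M) + c"
    by (simp add: nn_integral_add emeasure_space_1)
  also have "\<dots> \<le> S + c"
    using stopped[OF T T_le] by (rule add_right_mono)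
  finally show ?thesis
    by (simp add: C_def)
qed

lemma nn_integral_hitting_le:
  fixes X :: "nat \<Rightarrow> 'a \<Rightarrow> ennreal" and h :: "'a \<Rightarrow> ennreal"
  assumes X: "\<And>n. X n \<in> borel_measurable (F n)" and h: "h \<in> borel_measurable (F N)"
    and stopped: "\<And>T K. stopping_time F T \<Longrightarrow> (\<And>\<omega>. T \<omega> \<le> K) \<Longrightarrow> (\<integral>\<^sup>+\<omega>. X (T \<omega>) \<omega> \<partial>M) \<le> S"
  shows "(\<integral>\<^sup>+\<omega>. h \<omega> * indicator {\<omega>\<in>space M. \<exists>n\<ge>N. h \<omega> \<le> X n \<omega> + c} \<omega> \<partial>M) \<le> S + c"
proof -
  define D where "D K = {\<omega>\<in>space M. \<exists>n\<in>{N..N + K}. h \<omega> \<le> X n \<omega> + c}" for K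
  have [measurable]: "h \<in> borel_measurable M" "X n \<in> borel_measurable M" for n
    using measurable_F h X by blast+
  have "h \<omega> * indicator {\<omega>\<in>space M. \<exists>n\<ge>N. h \<omega> \<le> X n \<omega> + c} \<omega> \<le> (SUP K. h \<omega> * indicator (D K) \<omega>)"
    for \<omega>
  proof (cases "\<omega> \<in> {\<omega>\<in>space M. \<exists>n\<ge>N. h \<omega> \<le> X n \<omega> + c}")
    case True
    then obtain n where "N \<le> n" "h \<omega> \<le> X n \<omega> + c" "\<omega> \<in> space M" by auto
    then have "\<omega> \<in> D (n - N)" by (auto simp: D_def)
    then show ?thesis using True by (intro SUP_upper2[of "n - N"]) auto
  qed simp
  then have "(\<integral>\<^sup>+\<omega>. h \<omega> * indicator {\<omega>\<in>space M. \<exists>n\<ge>N. h \<omega> \<le> X n \<omega> + c} \<omega> \<partial>M)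
      \<le> (\<integral>\<^sup>+\<omega>. (SUP K. h \<omega> * indicator (D K) \<omega>) \<partial>M)"
    by (rule nn_integral_mono)
  also have "\<dots> = (SUP K. \<integral>\<^sup>+\<omega>. h \<omega> * indicator (D K) \<omega> \<partial>M)"
  proof (rule nn_integral_monotone_convergence_SUP)
    show "incseq (\<lambda>K \<omega>. h \<omega> * indicator (D K) \<omega>)"
      by (auto simp: incseq_def le_fun_def D_def indicator_def)
  qed (simp add: D_def)
  also have "\<dots> \<le> S + c"
    unfolding D_def by (intro SUP_least nn_integral_hitting_within_le[OF X h stopped])
  finally show ?thesis .
qed

lemma nn_integral_le_of_bounded_stopping_plus_exceptional:
  fixes X :: "nat \<Rightarrow> 'a \<Rightarrow> ennreal" and g h :: "'a \<Rightarrow> ennreal"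
  assumes X: "\<And>n. X n \<in> borel_measurable (F n)"
    and stopped: "\<And>T K. stopping_time F T \<Longrightarrow> (\<And>\<omega>. T \<omega> \<le> K) \<Longrightarrow> (\<integral>\<^sup>+\<omega>. X (T \<omega>) \<omega> \<partial>M) \<le> S"
    and h: "h \<in> borel_measurable (F N)" and Bad: "Bad \<in> sets M"
    and h_eq: "\<And>\<omega>. \<omega> \<in> space M - Bad \<Longrightarrow> h \<omega> = g \<omega>"
    and g_le: "\<And>\<omega>. \<omega> \<in> space M \<Longrightarrow> g \<omega> \<le> limsup (\<lambda>n. X n \<omega>)" and g_fin: "\<And>\<omega>. g \<omega> < top"
    and g_bound: "\<And>\<omega>. \<omega> \<in> space M \<Longrightarrow> g \<omega> \<le> b" and c: "0 < c"
  shows "(\<integral>\<^sup>+\<omega>. g \<omega> \<partial>M) \<le> S + c + b * emeasure M Bad"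
proof -
  define Hit where "Hit = {\<omega>\<in>space M. \<exists>n\<ge>N. h \<omega> \<le> X n \<omega> + c}"
  have [measurable]: "h \<in> borel_measurable M" "X n \<in> borel_measurable M" for n
    using measurable_F h X by blast+
  have "g \<omega> \<le> h \<omega> * indicator Hit \<omega> + b * indicator Bad \<omega>" if \<omega>: "\<omega> \<in> space M" for \<omega>
  proof (cases "\<omega> \<in> Bad")
    case True
    then have "g \<omega> \<le> b * indicator Bad \<omega>"
      using g_bound[OF \<omega>] by simp
    then show ?thesis
      by (rule order_trans) simp
  next
    case False
    then have "h \<omega> = g \<omega>"
      using \<omega> h_eq by blast
    moreover have "\<exists>n\<ge>N. g \<omega> \<le> X n \<omega> + c"
      by (rule le_limsup_imp_ex_le_add[OF g_le[OF \<omega>] g_fin c])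
    ultimately have "\<omega> \<in> Hit"
      using \<omega> by (simp add: Hit_def)
    then show ?thesis
      using \<open>h \<omega> = g \<omega>\<close> by simp
  qed
  then have "(\<integral>\<^sup>+\<omega>. g \<omega> \<partial>M) \<le> (\<integral>\<^sup>+\<omega>. h \<omega> * indicator Hit \<omega> + b * indicator Bad \<omega> \<partial>M)"
    by (rule nn_integral_mono)
  also have "\<dots> = (\<integral>\<^sup>+\<omega>. h \<omega> * indicator Hit \<omega> \<partial>M) + b * emeasure M Bad"
    using Bad by (subst nn_integral_add) (auto simp: Hit_def nn_integral_cmult_indicator)
  also have "(\<integral>\<^sup>+\<omega>. h \<omega> * indicator Hit \<omega> \<partial>M) \<le> S + c"
    unfolding Hit_def by (rule nn_integral_hitting_le[OF X h stopped])
  finally show ?thesis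
    by (simp add: add_right_mono)
qed

lemma nn_integral_finite_range_le_of_bounded_stopping:
  fixes X :: "nat \<Rightarrow> 'a \<Rightarrow> ennreal" and g :: "'a \<Rightarrow> ennreal"
  assumes X: "\<And>n. X n \<in> borel_measurable (F n)"
    and stopped: "\<And>T K. stopping_time F T \<Longrightarrow> (\<And>\<omega>. T \<omega> \<le> K) \<Longrightarrow> (\<integral>\<^sup>+\<omega>. X (T \<omega>) \<omega> \<partial>M) \<le> S"
    and g: "g \<in> borel_measurable F_infinity" "finite (g ` space M)" "\<And>\<omega>. g \<omega> < top"
    and g_le: "\<And>\<omega>. \<omega> \<in> space M \<Longrightarrow> g \<omega> \<le> limsup (\<lambda>n. X n \<omega>)"
  shows "(\<integral>\<^sup>+\<omega>. g \<omega> \<partial>M) \<le> S"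
proof (rule ennreal_le_epsilon)
  fix e :: real assume e: "0 < e"
  define b where "b = (\<Sum>v\<in>g ` space M. enn2real v)"
  have "0 \<le> b" by (simp add: b_def sum_nonneg)
  have b: "g \<omega> \<le> ennreal b" if "\<omega> \<in> space M" for \<omega>
  proof -
    have "enn2real (g \<omega>) \<le> b"
      unfolding b_def using g(2) that by (intro member_le_sum) auto
    then show ?thesis
      using g(3)[of \<omega>] by (metis ennreal_enn2real ennreal_leI less_top)
  qed
  have \<eta>: "0 < e / 2 / (b + 1)"
    using e \<open>0 \<le> b\<close> by simp
  obtain h N Bad where h: "h \<in> borel_measurable (F N)" and Bad: "Bad \<in> sets M"
    and measure_Bad: "measure M Bad < e / 2 / (b + 1)"
    and h_eq: "\<And>\<omega>. \<omega> \<in> space M - Bad \<Longrightarrow> h \<omega> = g \<omega>"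
    using finite_range_approx_F[OF g(1,2) \<eta>] by metis
  have "(\<integral>\<^sup>+\<omega>. g \<omega> \<partial>M) \<le> S + ennreal (e / 2) + ennreal b * emeasure M Bad"
    using e by (intro nn_integral_le_of_bounded_stopping_plus_exceptional[OF X stopped h Bad h_eq g_le g(3) b]) auto
  also have "ennreal b * emeasure M Bad \<le> ennreal (e / 2)"
  proof -
    have "b * measure M Bad \<le> (b + 1) * (e / 2 / (b + 1))"
      using measure_Bad \<open>0 \<le> b\<close> by (intro mult_mono) auto
    also have "\<dots> = e / 2"
      using \<open>0 \<le> b\<close> by (simp add: field_simps)
    finally show ?thesis
      using \<open>0 \<le> b\<close> by (simp add: emeasure_eq_measure ennreal_mult[symmetric] ennreal_leI)
  qed
  finally show "(\<integral>\<^sup>+\<omega>. g \<omega> \<partial>M) \<le> S + ennreal e"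
    using e by (simp add: add.assoc add_left_mono flip: ennreal_plus)
qed

lemma nn_integral_limsup_le_of_bounded_stopping:
  fixes X :: "nat \<Rightarrow> 'a \<Rightarrow> ennreal"
  assumes X: "\<And>n. X n \<in> borel_measurable (F n)"
    and stopped: "\<And>T K. stopping_time F T \<Longrightarrow> (\<And>\<omega>. T \<omega> \<le> K) \<Longrightarrow> (\<integral>\<^sup>+\<omega>. X (T \<omega>) \<omega> \<partial>M) \<le> S"
  shows "(\<integral>\<^sup>+\<omega>. limsup (\<lambda>n. X n \<omega>) \<partial>M) \<le> S"
proof -
  have "(\<lambda>\<omega>. limsup (\<lambda>n. X n \<omega>)) \<in> borel_measurable F_infinity"
    using measurable_F_infinity[OF X] by measurable
  then obtain f where f: "\<And>i. simple_function F_infinity (f i)" "incseq f" "\<And>i \<omega>. f i \<omega> < top"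
    "\<And>\<omega>. (SUP i. f i \<omega>) = limsup (\<lambda>n. X n \<omega>)"
    using borel_measurable_implies_simple_function_sequence' by blast
  have f_M: "f i \<in> borel_measurable M" for i
    using measurable_from_subalg[OF subalgebra_F_infinity borel_measurable_simple_function[OF f(1)]] .
  have "(\<integral>\<^sup>+\<omega>. f i \<omega> \<partial>M) \<le> S" for i
  proof (rule nn_integral_finite_range_le_of_bounded_stopping[OF X stopped])
    show "f i \<in> borel_measurable F_infinity"
      by (rule borel_measurable_simple_function[OF f(1)])
    show "finite (f i ` space M)"
      using simple_functionD(1)[OF f(1)] by (simp add: space_F_infinity)
    show "f i \<omega> \<le> limsup (\<lambda>n. X n \<omega>)" for \<omega>
      unfolding f(4)[symmetric] by (rule SUP_upper) simp
  qed (use f(3) in auto)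
  then have "(SUP i. \<integral>\<^sup>+\<omega>. f i \<omega> \<partial>M) \<le> S"
    by (rule SUP_least)
  then show ?thesis
    by (simp add: f(4)[symmetric] nn_integral_monotone_convergence_SUP[OF f(2) f_M])
qed

subsection \<open>Optional stopping for processes with defects\<close>

lemma optional_stopping_min_le:
  fixes X d :: "nat \<Rightarrow> 'a \<Rightarrow> ennreal"
  assumes X: "\<And>n. X n \<in> borel_measurable (F n)" and d[measurable]: "\<And>n. d n \<in> borel_measurable M"
    and step: "\<And>n A. A \<in> sets (F n) \<Longrightarrow>
      (\<integral>\<^sup>+\<omega>. indicator A \<omega> * X (Suc n) \<omega> \<partial>M) \<le> (\<integral>\<^sup>+\<omega>. indicator A \<omega> * (X n \<omega> + d n \<omega>) \<partial>M)"
    and T: "stopping_time F T"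
  shows "(\<integral>\<^sup>+\<omega>. X (min (T \<omega>) k) \<omega> \<partial>M)
    \<le> (\<integral>\<^sup>+\<omega>. X 0 \<omega> \<partial>M) + (\<Sum>n<k. \<integral>\<^sup>+\<omega>. indicator {\<omega>\<in>space M. n < T \<omega>} \<omega> * d n \<omega> \<partial>M)"
proof (induction k)
  case (Suc k)
  define A where "A = {\<omega>\<in>space M. k < T \<omega>}"
  have A: "A \<in> sets (F k)"
    using stopping_timeD2[OF T, of k] by (simp add: A_def pred_def space_F)
  have [measurable]: "A \<in> sets M" "X n \<in> borel_measurable M" for n
    using A X sets_F_into_M measurable_F by blast+
  have [measurable]: "(\<lambda>\<omega>. X (min (T \<omega>) k) \<omega>) \<in> borel_measurable M"
    using stopping_time_min[OF T stopping_time_const]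
    by (intro measurable_F[OF measurable_stopped_F[OF _ _ X, where K=k]]) auto
  have "(\<integral>\<^sup>+\<omega>. X (min (T \<omega>) (Suc k)) \<omega> \<partial>M)
      = (\<integral>\<^sup>+\<omega>. indicator (space M - A) \<omega> * X (min (T \<omega>) k) \<omega> + indicator A \<omega> * X (Suc k) \<omega> \<partial>M)"
    by (intro nn_integral_cong) (auto simp: A_def indicator_def min_def le_Suc_eq)
  also have "\<dots> = (\<integral>\<^sup>+\<omega>. indicator (space M - A) \<omega> * X (min (T \<omega>) k) \<omega> \<partial>M)
      + (\<integral>\<^sup>+\<omega>. indicator A \<omega> * X (Suc k) \<omega> \<partial>M)"
    by (intro nn_integral_add) auto
  also have "\<dots> \<le> (\<integral>\<^sup>+\<omega>. indicator (space M - A) \<omega> * X (min (T \<omega>) k) \<omega> \<partial>M)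
      + (\<integral>\<^sup>+\<omega>. indicator A \<omega> * (X k \<omega> + d k \<omega>) \<partial>M)"
    by (intro add_left_mono step A)
  also have "\<dots> = (\<integral>\<^sup>+\<omega>. indicator (space M - A) \<omega> * X (min (T \<omega>) k) \<omega> + indicator A \<omega> * X k \<omega> \<partial>M)
      + (\<integral>\<^sup>+\<omega>. indicator A \<omega> * d k \<omega> \<partial>M)"
    by (simp add: distrib_left nn_integral_add add.assoc)
  also have "(\<integral>\<^sup>+\<omega>. indicator (space M - A) \<omega> * X (min (T \<omega>) k) \<omega> + indicator A \<omega> * X k \<omega> \<partial>M)
      = (\<integral>\<^sup>+\<omega>. X (min (T \<omega>) k) \<omega> \<partial>M)"
    by (intro nn_integral_cong) (auto simp: A_def indicator_def min_def)
  also have "(\<integral>\<^sup>+\<omega>. X (min (T \<omega>) k) \<omega> \<partial>M) + (\<integral>\<^sup>+\<omega>. indicator A \<omega> * d k \<omega> \<partial>M)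
      \<le> ((\<integral>\<^sup>+\<omega>. X 0 \<omega> \<partial>M)
      + (\<Sum>n<k. \<integral>\<^sup>+\<omega>. indicator {\<omega>\<in>space M. n < T \<omega>} \<omega> * d n \<omega> \<partial>M))
      + (\<integral>\<^sup>+\<omega>. indicator A \<omega> * d k \<omega> \<partial>M)"
    by (rule add_right_mono[OF Suc.IH])
  finally show ?case
    by (simp add: A_def add.assoc)
qed simp

lemma pred_enat_less_ext_stopping_time:
  assumes "ext_stopping_time M F \<tau>"
  shows "Measurable.pred M (\<lambda>\<omega>. enat n < \<tau> \<omega>)"
proof -
  have "Measurable.pred M (\<lambda>\<omega>. \<tau> \<omega> \<le> enat n)"
    using assms unfolding ext_stopping_time_def pred_def by (blast intro: sets_F_into_M)
  then have "Measurable.pred M (\<lambda>\<omega>. \<not> \<tau> \<omega> \<le> enat n)"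
    by measurable
  then show ?thesis
    by (simp add: not_le)
qed

lemma optional_stopping_min_enat_le:
  fixes X d :: "nat \<Rightarrow> 'a \<Rightarrow> ennreal"
  assumes X: "\<And>n. X n \<in> borel_measurable (F n)" and d[measurable]: "\<And>n. d n \<in> borel_measurable M"
    and step: "\<And>n A. A \<in> sets (F n) \<Longrightarrow>
      (\<integral>\<^sup>+\<omega>. indicator A \<omega> * X (Suc n) \<omega> \<partial>M) \<le> (\<integral>\<^sup>+\<omega>. indicator A \<omega> * (X n \<omega> + d n \<omega>) \<partial>M)"
    and \<tau>: "ext_stopping_time M F \<tau>" and \<sigma>: "stopping_time F \<sigma>" and \<sigma>_le: "\<And>\<omega>. \<sigma> \<omega> \<le> K"
  shows "(\<integral>\<^sup>+\<omega>. X (the_enat (min (\<tau> \<omega>) (enat (\<sigma> \<omega>)))) \<omega> \<partial>M)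
    \<le> (\<integral>\<^sup>+\<omega>. X 0 \<omega> \<partial>M) + (\<integral>\<^sup>+\<omega>. (\<Sum>n. if enat n < \<tau> \<omega> then d n \<omega> else 0) \<partial>M)"
proof -
  define T where "T \<omega> = the_enat (min (\<tau> \<omega>) (enat (\<sigma> \<omega>)))" for \<omega>
  have T: "stopping_time F T"
    unfolding T_def by (rule stopping_time_min_enat[OF \<tau> \<sigma>])
  have T_le: "T \<omega> \<le> K" and T_less: "n < T \<omega> \<Longrightarrow> enat n < \<tau> \<omega>" for n \<omega>
    using \<sigma>_le[of \<omega>] by (cases "\<tau> \<omega>"; auto simp: T_def)+
  have [measurable]: "Measurable.pred M (\<lambda>\<omega>. enat n < \<tau> \<omega>)" for n
    by (rule pred_enat_less_ext_stopping_time[OF \<tau>])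
  have "(\<integral>\<^sup>+\<omega>. X (T \<omega>) \<omega> \<partial>M) = (\<integral>\<^sup>+\<omega>. X (min (T \<omega>) K) \<omega> \<partial>M)"
    using T_le by (simp add: min_absorb1)
  also have "\<dots> \<le> (\<integral>\<^sup>+\<omega>. X 0 \<omega> \<partial>M)
      + (\<Sum>n<K. \<integral>\<^sup>+\<omega>. indicator {\<omega>\<in>space M. n < T \<omega>} \<omega> * d n \<omega> \<partial>M)"
    by (rule optional_stopping_min_le[OF X d step T])
  also have "(\<Sum>n<K. \<integral>\<^sup>+\<omega>. indicator {\<omega>\<in>space M. n < T \<omega>} \<omega> * d n \<omega> \<partial>M)
      \<le> (\<Sum>n<K. \<integral>\<^sup>+\<omega>. (if enat n < \<tau> \<omega> then d n \<omega> else 0) \<partial>M)"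
    using T_less by (intro sum_mono nn_integral_mono) (auto simp: indicator_def)
  also have "\<dots> \<le> (\<Sum>n. \<integral>\<^sup>+\<omega>. (if enat n < \<tau> \<omega> then d n \<omega> else 0) \<partial>M)"
    by (rule sum_le_suminf) auto
  also have "\<dots> = (\<integral>\<^sup>+\<omega>. (\<Sum>n. if enat n < \<tau> \<omega> then d n \<omega> else 0) \<partial>M)"
    by (rule nn_integral_suminf[symmetric]) measurable
  finally show ?thesis
    by (simp add: T_def add_left_mono)
qed

lemma optional_stopping_limsup_le:
  fixes X d :: "nat \<Rightarrow> 'a \<Rightarrow> ennreal"
  assumes X: "\<And>n. X n \<in> borel_measurable (F n)" and d: "\<And>n. d n \<in> borel_measurable M"
    and step: "\<And>n A. A \<in> sets (F n) \<Longrightarrow>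
      (\<integral>\<^sup>+\<omega>. indicator A \<omega> * X (Suc n) \<omega> \<partial>M) \<le> (\<integral>\<^sup>+\<omega>. indicator A \<omega> * (X n \<omega> + d n \<omega>) \<partial>M)"
    and \<tau>: "ext_stopping_time M F \<tau>"
  shows "(\<integral>\<^sup>+\<omega>. limsup (\<lambda>n. X (the_enat (min (\<tau> \<omega>) (enat n))) \<omega>) \<partial>M)
    \<le> (\<integral>\<^sup>+\<omega>. X 0 \<omega> \<partial>M) + (\<integral>\<^sup>+\<omega>. (\<Sum>n. if enat n < \<tau> \<omega> then d n \<omega> else 0) \<partial>M)"
proof (rule nn_integral_limsup_le_of_bounded_stopping)
  show "(\<lambda>\<omega>. X (the_enat (min (\<tau> \<omega>) (enat n))) \<omega>) \<in> borel_measurable (F n)" for n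
  proof (rule measurable_stopped_F[OF stopping_time_min_enat[OF \<tau> stopping_time_const] _ X])
    show "the_enat (min (\<tau> \<omega>) (enat n)) \<le> n" for \<omega>
      by (cases "\<tau> \<omega>") auto
  qed
qed (rule optional_stopping_min_enat_le[OF X d step \<tau>])

end

lemma e2ennreal_max_diff: "e2ennreal (max (enn2ereal a - enn2ereal b) 0) = a - b"
  by (metis e2ennreal_enn2ereal max.commute minus_ennreal.rep_eq)

lemma nn_integral_indicator_Suc_le_delta_pos:
  assumes "prob_space P" and sub: "subalgebra P (F m n)"
    and E: "E m (Suc n) \<in> borel_measurable P" and A: "A \<in> sets (F m n)"
  shows "(\<integral>\<^sup>+\<omega>. indicator A \<omega> * E m (Suc n) \<omega> \<partial>P)
    \<le> (\<integral>\<^sup>+\<omega>. indicator A \<omega> * (E m n \<omega> + delta_pos P F E m n \<omega>) \<partial>P)"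
proof (cases "(\<integral>\<^sup>+\<omega>. E m (Suc n) \<omega> \<partial>P) < \<infinity>")
  case True
  interpret prob_space P by fact
  interpret finite_measure_subalgebra P "F m n"
    using sub by unfold_locales
  have "(\<integral>\<^sup>+\<omega>. indicator A \<omega> * E m (Suc n) \<omega> \<partial>P)
      = (\<integral>\<^sup>+\<omega>. indicator A \<omega> * nn_cond_exp P (F m n) (E m (Suc n)) \<omega> \<partial>P)"
    using A E by (intro nn_cond_exp_intg[symmetric]) auto
  also have "\<dots> \<le> (\<integral>\<^sup>+\<omega>. indicator A \<omega> * (E m n \<omega> + delta_pos P F E m n \<omega>) \<partial>P)"
  proof (intro nn_integral_mono mult_left_mono)
    fix \<omega>
    have "delta_pos P F E m n \<omega> = nn_cond_exp P (F m n) (E m (Suc n)) \<omega> - E m n \<omega>"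
      using True by (simp add: delta_pos_def delta_def e2ennreal_max_diff)
    then show "nn_cond_exp P (F m n) (E m (Suc n)) \<omega> \<le> E m n \<omega> + delta_pos P F E m n \<omega>"
      using ennreal_minus_le_iff by auto
  qed simp
  finally show ?thesis .
next
  case False
  then have "delta_pos P F E m n \<omega> = \<infinity>" for \<omega>
    by (simp add: delta_pos_def delta_def)
  then show ?thesis
    by (intro nn_integral_mono mult_left_mono) auto
qed

lemma stopped_value_eq_limsup:
  "stopped_value E m \<tau> \<omega> = limsup (\<lambda>n. E m (the_enat (min (\<tau> \<omega>) (enat n))) \<omega>)"
proof (cases "\<tau> \<omega>")
  case (enat j)
  have "eventually (\<lambda>n. E m (the_enat (min (\<tau> \<omega>) (enat n))) \<omega> = E m j \<omega>) sequentially"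
    using eventually_ge_at_top[of j] by eventually_elim (simp add: enat)
  then have "limsup (\<lambda>n. E m (the_enat (min (\<tau> \<omega>) (enat n))) \<omega>) = E m j \<omega>"
    by (intro lim_imp_Limsup trivial_limit_sequentially tendsto_eventually)
  then show ?thesis
    by (simp add: stopped_value_def enat)
qed (simp add: stopped_value_def)

lemma filtered_prob_space_filtration_array:
  assumes P: "prob_space P" "sets P = sets M" and filt: "filtration_array M F"
  shows "filtered_prob_space P (F m)"
proof -
  have sub: "subalgebra M (F m n)" for n
    using filt by (simp add: filtration_array_def)
  have "space (F m n) = space P" "sets (F m n) \<subseteq> sets P" for n
    using sub[of n] P(2) sets_eq_imp_space_eq[OF P(2)] by (simp_all add: subalgebra_def)
  moreover have "sets (F m i) \<subseteq> sets (F m j)" if "i \<le> j" for i j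
    using lift_Suc_mono_le[of "\<lambda>n. sets (F m n)", OF _ that] filt
    by (auto simp: filtration_array_def)
  ultimately show ?thesis
    using P(1) by (intro filtered_prob_space.intro filtration.intro filtered_prob_space_axioms.intro)
qed

lemma nn_integral_stopped_value_le:
  assumes P: "prob_space P" "sets P = sets M" and filt: "filtration_array M F"
    and adapt: "adapted_array F E"
    and \<tau>: "ext_stopping_time M (F m) \<tau>" and \<tau>_le: "AE \<omega> in P. \<tau> \<omega> \<le> \<rho>"
  shows "(\<integral>\<^sup>+\<omega>. stopped_value E m \<tau> \<omega> \<partial>P)
    \<le> (\<integral>\<^sup>+\<omega>. E m 0 \<omega> \<partial>P) + (\<integral>\<^sup>+\<omega>. (\<Sum>n. if enat n < \<rho> then delta_pos P F E m n \<omega> else 0) \<partial>P)"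
proof -
  interpret filtered_prob_space P "F m"
    using filtered_prob_space_filtration_array[OF P filt] .
  have E: "E m n \<in> borel_measurable (F m n)" for n
    using adapt by (simp add: adapted_array_def)
  have [measurable]: "delta_pos P F E m n \<in> borel_measurable P" for n
    using measurable_F[OF E] unfolding delta_pos_def delta_def by measurable
  have "(\<integral>\<^sup>+\<omega>. stopped_value E m \<tau> \<omega> \<partial>P)
      \<le> (\<integral>\<^sup>+\<omega>. E m 0 \<omega> \<partial>P) + (\<integral>\<^sup>+\<omega>. (\<Sum>n. if enat n < \<tau> \<omega> then delta_pos P F E m n \<omega> else 0) \<partial>P)"
    unfolding stopped_value_eq_limsup
  proof (rule optional_stopping_limsup_le[OF E])
    show "ext_stopping_time P (F m) \<tau>"
      using \<tau> sets_eq_imp_space_eq[OF P(2)] by (simp add: ext_stopping_time_def)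
    show "(\<integral>\<^sup>+\<omega>. indicator A \<omega> * E m (Suc n) \<omega> \<partial>P)
      \<le> (\<integral>\<^sup>+\<omega>. indicator A \<omega> * (E m n \<omega> + delta_pos P F E m n \<omega>) \<partial>P)"
      if "A \<in> sets (F m n)" for n A
      using nn_integral_indicator_Suc_le_delta_pos[where F=F and E=E and m=m and n=n,
          OF P(1) subalgebra_F measurable_F[OF E] that] .
  qed measurable
  also have "\<dots> \<le> (\<integral>\<^sup>+\<omega>. E m 0 \<omega> \<partial>P) + (\<integral>\<^sup>+\<omega>. (\<Sum>n. if enat n < \<rho> then delta_pos P F E m n \<omega> else 0) \<partial>P)"
    using \<tau>_le by (intro add_left_mono nn_integral_mono_AE) (auto elim!: eventually_mono intro!: suminf_le)
  finally show ?thesis .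
qed

lemma Limsup_add_tendsto_zero_le:
  fixes b c :: "nat \<Rightarrow> ennreal"
  assumes "c \<longlonglongrightarrow> 0"
  shows "limsup (\<lambda>m. b m + c m) \<le> limsup b"
proof (rule ennreal_le_epsilon)
  fix e :: real assume "0 < e"
  then have "eventually (\<lambda>m. c m < ennreal e) sequentially"
    using assms by (intro order_tendstoD(2)) auto
  then have "limsup (\<lambda>m. b m + c m) \<le> limsup (\<lambda>m. b m + ennreal e)"
    by (intro Limsup_mono) (auto elim!: eventually_mono intro: add_left_mono less_imp_le)
  also have "\<dots> = limsup b + ennreal e"
    using Limsup_const_add[of sequentially "ennreal e" b] by (simp add: add.commute)
  finally show "limsup (\<lambda>m. b m + c m) \<le> limsup b + ennreal e" .
qed

theorem mainTheorem7:
  fixes M :: "'a measure" and Ps :: "'a measure set"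
    and F :: "nat \<Rightarrow> nat \<Rightarrow> 'a measure" and E :: "nat \<Rightarrow> nat \<Rightarrow> 'a \<Rightarrow> ennreal"
    and r :: "nat \<Rightarrow> enat"
  assumes Ps: "\<forall>P\<in>Ps. prob_space P \<and> sets P = sets M"
    and filt: "filtration_array M F"
    and adapt: "adapted_array F E"
    and supermart: "asymptotic_supermartingale Ps F E"
    and calib: "limsup (\<lambda>m. SUP P\<in>Ps. \<integral>\<^sup>+ \<omega>. E m 0 \<omega> \<partial>P) \<le> 1"
    and r_cond: "(\<lambda>m. SUP P\<in>Ps. \<integral>\<^sup>+ \<omega>. (\<Sum>n. if enat n < r m then delta_pos P F E m n \<omega> else 0) \<partial>P)
                   \<longlonglongrightarrow> 0"
  shows "asymptotic_e_process M r Ps F E"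
  unfolding asymptotic_e_process_def
proof (intro allI impI)
  fix \<tau> assume \<tau>: "\<forall>m. \<tau> m \<in> stopping_times_bounded M (r m) (F m) Ps"
  let ?start = "\<lambda>m. SUP P\<in>Ps. \<integral>\<^sup>+ \<omega>. E m 0 \<omega> \<partial>P"
  let ?defect = "\<lambda>m. SUP P\<in>Ps. \<integral>\<^sup>+ \<omega>. (\<Sum>n. if enat n < r m then delta_pos P F E m n \<omega> else 0) \<partial>P"
  have "(SUP P\<in>Ps. \<integral>\<^sup>+\<omega>. stopped_value E m (\<tau> m) \<omega> \<partial>P) \<le> ?start m + ?defect m" for m
  proof (rule SUP_least)
    fix P assume "P \<in> Ps"
    then have "(\<integral>\<^sup>+\<omega>. stopped_value E m (\<tau> m) \<omega> \<partial>P) \<le> (\<integral>\<^sup>+\<omega>. E m 0 \<omega> \<partial>P)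
        + (\<integral>\<^sup>+\<omega>. (\<Sum>n. if enat n < r m then delta_pos P F E m n \<omega> else 0) \<partial>P)"
      using Ps \<tau> by (intro nn_integral_stopped_value_le[OF _ _ filt adapt]) (auto simp: stopping_times_bounded_def)
    also have "\<dots> \<le> ?start m + ?defect m"
      using \<open>P \<in> Ps\<close> by (intro add_mono SUP_upper)
    finally show "(\<integral>\<^sup>+\<omega>. stopped_value E m (\<tau> m) \<omega> \<partial>P) \<le> ?start m + ?defect m" .
  qed
  then have "limsup (\<lambda>m. SUP P\<in>Ps. \<integral>\<^sup>+\<omega>. stopped_value E m (\<tau> m) \<omega> \<partial>P) \<le> limsup (\<lambda>m. ?start m + ?defect m)"
    by (intro Limsup_mono) auto
  also have "\<dots> \<le> limsup ?start"
    using r_cond by (rule Limsup_add_tendsto_zero_le)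
  finally show "limsup (\<lambda>m. SUP P\<in>Ps. \<integral>\<^sup>+\<omega>. stopped_value E m (\<tau> m) \<omega> \<partial>P) \<le> 1"
    using calib by (rule order_trans)
qed

end
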